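(* For $n\ge1$ and $k\ge1$, let $a_{n,k}(\tau)$ denote the number of cyclic permutations $\pi\in\mathfrak S_n$ whose one-line notation avoids $\delta_k=k(k-1)\cdots21$ and whose cycle form $C(\pi)$ avoids $\tau$. Then $a_{n,k}(312)=a_{n,k}(213)$ for all $n\ge1$, $k\ge1$. Consequently the generating functions $f_k(z;312)=\sum_{n\ge1}a_{n,k}(312)z^n$ and $f_k(z;213)=\sum_{n\ge1}a_{n,k}(213)z^n$ are equal.
   Context: A permutation $\pi\in\mathfrak S_n$ is cyclic if it consists of a single $n$-cycle. For cyclic $\pi$, $C(\pi)=(1,c_2,\dots,c_n)$ with $c_2=\pi(1)$, $c_{i+1}=\pi(c_i)$, viewed as the sequence $1c_2\cdots c_n$ for pattern avoidance. A sequence avoids a pattern $\sigma\in\mathfrak S_m$ if no subsequence of length $m$ is in the same relative order as $\sigma$. The one-line notation of $\pi$ is $\pi_1\cdots\pi_n$, $\pi_i=\pi(i)$. *)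

theory Defs
  imports "HOL-Combinatorics.Permutations" "HOL-Computational_Algebra.Formal_Power_Series"
begin

definition contains_pattern :: "nat list \<Rightarrow> nat list \<Rightarrow> bool" where
  "contains_pattern xs sigma \<longleftrightarrow>
     (\<exists>idx :: nat \<Rightarrow> nat.
        strict_mono_on {..<length sigma} idx \<and>
        (\<forall>j<length sigma. idx j < length xs) \<and>
        (\<forall>a<length sigma. \<forall>b<length sigma.
            (xs ! idx a < xs ! idx b) \<longleftrightarrow> (sigma ! a < sigma ! b)))"

definition avoids :: "nat list \<Rightarrow> nat list \<Rightarrow> bool" where
  "avoids xs sigma \<longleftrightarrow> \<not> contains_pattern xs sigma"

definition one_line :: "nat \<Rightarrow> (nat \<Rightarrow> nat) \<Rightarrow> nat list" where
  "one_line n p = map p [1..<n+1]"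

definition cycle_form :: "nat \<Rightarrow> (nat \<Rightarrow> nat) \<Rightarrow> nat list" where
  "cycle_form n p = map (\<lambda>i. (p ^^ i) 1) [0..<n]"

definition cyclic_perm :: "nat \<Rightarrow> (nat \<Rightarrow> nat) \<Rightarrow> bool" where
  "cyclic_perm n p \<longleftrightarrow> p permutes {1..n} \<and> set (cycle_form n p) = {1..n}"

definition delta :: "nat \<Rightarrow> nat list" where
  "delta k = rev [1..<k+1]"

definition a_count :: "nat \<Rightarrow> nat \<Rightarrow> nat list \<Rightarrow> nat" where
  "a_count n k tau = card {p. cyclic_perm n p \<and> avoids (one_line n p) (delta k)
                              \<and> avoids (cycle_form n p) tau}"

definition gf :: "nat \<Rightarrow> nat list \<Rightarrow> int fps" where
  "gf k tau = Abs_fps (\<lambda>n. if n \<ge> 1 then int (a_count n k tau) else 0)"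

end

theory Submission
  imports Defs
begin

(* Inversion pi |-> pi^-1 is the bijection. It preserves cyclicity, and it preserves
   delta_k-avoidance because a decreasing subsequence of pi, with positions and values
   swapped and read backwards, is a decreasing subsequence of pi^-1. On cycle forms it
   reverses everything after the leading 1: C(pi^-1) = 1 c_n ... c_2. Since 213 is the
   reverse of 312, and in neither pattern the first entry is the smallest, an occurrence
   can never use the leading 1; hence C(pi) avoids 312 iff C(pi^-1) avoids 213. *)

lemma contains_pattern_Cons:
  assumes "contains_pattern xs s"
  shows "contains_pattern (x # xs) s"
proof -
  from assms obtain idx where "strict_mono_on {..<length s} idx"
    and "\<forall>j<length s. idx j < length xs"
    and "\<forall>a<length s. \<forall>b<length s. (xs ! idx a < xs ! idx b) \<longleftrightarrow> (s ! a < s ! b)"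
    unfolding contains_pattern_def by blast
  then show ?thesis
    unfolding contains_pattern_def
    by (intro exI[of _ "Suc \<circ> idx"]) (auto simp: strict_mono_on_def)
qed

lemma contains_pattern_Cons_min:
  assumes "contains_pattern (x # xs) s" and "\<forall>y\<in>set xs. x \<le> y" and "\<exists>y\<in>set s. y < hd s"
  shows "contains_pattern xs s"
proof -
  from assms(1) obtain idx where mono: "strict_mono_on {..<length s} idx"
    and bound: "\<forall>j<length s. idx j < length (x # xs)"
    and order: "\<forall>a<length s. \<forall>b<length s.
                  ((x # xs) ! idx a < (x # xs) ! idx b) \<longleftrightarrow> (s ! a < s ! b)"
    unfolding contains_pattern_def by blast
  from assms(3) obtain j where j: "j < length s" "s ! j < s ! 0"
    by (metis hd_conv_nth in_set_conv_nth list.set(1) empty_iff)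
  then have "0 < j" by (metis gr0I order.irrefl)
  have "idx 0 \<noteq> 0"
  proof
    assume "idx 0 = 0"
    moreover have "idx 0 < idx j"
      using j \<open>0 < j\<close> by (intro strict_mono_onD[OF mono]) auto
    moreover have "(x # xs) ! idx j < (x # xs) ! idx 0"
      using order[rule_format, of j 0] j by (cases s) auto
    moreover have "idx j < Suc (length xs)" using bound j by simp
    ultimately show False
      using assms(2) by (metis Suc_less_eq gr0_implies_Suc leD nth_Cons_0 nth_Cons_Suc nth_mem)
  qed
  then have pos: "0 < idx i" if "i < length s" for i
    using mono that by (metis gr0I not_less0 strict_mono_on_def lessThan_iff)
  show ?thesis
    unfolding contains_pattern_def
  proof (intro exI[of _ "\<lambda>i. idx i - 1"] conjI allI impI strict_mono_onI)
    fix a b assume "a \<in> {..<length s}" "b \<in> {..<length s}" "a < b"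
    then have "idx a < idx b" "0 < idx a" using pos by (auto intro: strict_mono_onD[OF mono])
    then show "idx a - 1 < idx b - 1" by linarith
  next
    fix i assume "i < length s"
    then show "idx i - 1 < length xs" using bound pos by force
  next
    fix a b assume "a < length s" "b < length s"
    then show "(xs ! (idx a - 1) < xs ! (idx b - 1)) = (s ! a < s ! b)"
      using order pos by (metis Suc_pred' nth_Cons_Suc)
  qed
qed

lemma contains_pattern_rev:
  assumes "contains_pattern xs s"
  shows "contains_pattern (rev xs) (rev s)"
proof -
  from assms obtain idx where mono: "strict_mono_on {..<length s} idx"
    and bound: "\<forall>j<length s. idx j < length xs"
    and order: "\<forall>a<length s. \<forall>b<length s. (xs ! idx a < xs ! idx b) \<longleftrightarrow> (s ! a < s ! b)"
    unfolding contains_pattern_def by blast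
  let ?m = "length s" and ?l = "length xs"
  let ?idx' = "\<lambda>j. ?l - Suc (idx (?m - Suc j))"
  have rev_at: "rev xs ! ?idx' j = xs ! idx (?m - Suc j)" "rev s ! j = s ! (?m - Suc j)"
    if "j < ?m" for j
  proof -
    have "idx (?m - Suc j) < ?l" using that bound by simp
    then show "rev xs ! ?idx' j = xs ! idx (?m - Suc j)" by (simp add: rev_nth Suc_diff_Suc)
    show "rev s ! j = s ! (?m - Suc j)" using that by (simp add: rev_nth)
  qed
  show ?thesis
    unfolding contains_pattern_def
  proof (intro exI[of _ ?idx'] conjI allI impI strict_mono_onI)
    fix a b assume "a \<in> {..<length (rev s)}" "b \<in> {..<length (rev s)}" "a < b"
    then have "idx (?m - Suc b) < idx (?m - Suc a)" "idx (?m - Suc a) < ?l"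
      using bound by (auto intro: strict_mono_onD[OF mono])
    then show "?idx' a < ?idx' b" by linarith
  next
    fix j assume "j < length (rev s)"
    then have "idx (?m - Suc j) < ?l" using bound by simp
    then show "?idx' j < length (rev xs)" by simp
  next
    fix a b assume "a < length (rev s)" "b < length (rev s)"
    then show "(rev xs ! ?idx' a < rev xs ! ?idx' b) = (rev s ! a < rev s ! b)"
      using order rev_at by simp
  qed
qed

lemma contains_pattern_rev_iff: "contains_pattern (rev xs) s \<longleftrightarrow> contains_pattern xs (rev s)"
  by (metis contains_pattern_rev rev_rev_ident)

lemma contains_delta_iff:
  "contains_pattern xs (delta k) \<longleftrightarrow>
     (\<exists>idx. strict_mono_on {..<k} idx \<and> (\<forall>j<k. idx j < length xs) \<and>
        (\<forall>a<k. \<forall>b<k. a < b \<longrightarrow> xs ! idx b < xs ! idx a))"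
proof -
  have delta_less: "delta k ! a < delta k ! b \<longleftrightarrow> b < a" if "a < k" "b < k" for a b
    using that unfolding delta_def by (simp add: rev_nth del: upt.simps) arith
  have "(\<forall>a<k. \<forall>b<k. (xs ! idx a < xs ! idx b) \<longleftrightarrow> (delta k ! a < delta k ! b))
      \<longleftrightarrow> (\<forall>a<k. \<forall>b<k. a < b \<longrightarrow> xs ! idx b < xs ! idx a)" for idx
    by (auto simp: delta_less) (metis less_asym linorder_neqE_nat)
  moreover have "length (delta k) = k" by (simp add: delta_def)
  ultimately show ?thesis unfolding contains_pattern_def by simp
qed

lemma one_line_contains_delta_iff:
  "contains_pattern (one_line n p) (delta k) \<longleftrightarrow>
     (\<exists>f. strict_mono_on {..<k} f \<and> (\<forall>j<k. f j \<in> {1..n}) \<and>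
        (\<forall>a<k. \<forall>b<k. a < b \<longrightarrow> p (f b) < p (f a)))"
proof -
  have nth: "one_line n p ! i = p (Suc i)" if "i < n" for i
    using that unfolding one_line_def by (simp del: upt.simps)
  have len: "length (one_line n p) = n" by (simp add: one_line_def)
  show ?thesis
    unfolding contains_delta_iff len
  proof (intro iffI; elim exE conjE)
    fix idx assume mono: "strict_mono_on {..<k} idx" and bound: "\<forall>j<k. idx j < n"
      and decr: "\<forall>a<k. \<forall>b<k. a < b \<longrightarrow> one_line n p ! idx b < one_line n p ! idx a"
    show "\<exists>f. strict_mono_on {..<k} f \<and> (\<forall>j<k. f j \<in> {1..n}) \<and>
        (\<forall>a<k. \<forall>b<k. a < b \<longrightarrow> p (f b) < p (f a))"
      using mono bound decr nth
      by (intro exI[of _ "Suc \<circ> idx"]) (auto simp: strict_mono_on_def Suc_le_eq)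
  next
    fix f assume mono: "strict_mono_on {..<k} f" and range: "\<forall>j<k. f j \<in> {1..n}"
      and decr: "\<forall>a<k. \<forall>b<k. a < b \<longrightarrow> p (f b) < p (f a)"
    have f_Suc: "f j = Suc (f j - 1)" "f j - 1 < n" if "j < k" for j
      using range that by fastforce+
    show "\<exists>idx. strict_mono_on {..<k} idx \<and> (\<forall>j<k. idx j < n) \<and>
        (\<forall>a<k. \<forall>b<k. a < b \<longrightarrow> one_line n p ! idx b < one_line n p ! idx a)"
    proof (intro exI[of _ "\<lambda>j. f j - 1"] conjI allI impI strict_mono_onI)
      fix a b assume "a \<in> {..<k}" "b \<in> {..<k}" "a < b"
      then show "f a - 1 < f b - 1" using f_Suc strict_mono_onD[OF mono] by fastforce
    next
      fix a b assume "a < k" "b < k" "a < b"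
      then show "one_line n p ! (f b - 1) < one_line n p ! (f a - 1)"
        using decr f_Suc nth by metis
    qed (use f_Suc in blast)
  qed
qed

lemma one_line_inv_contains_delta:
  assumes perm: "p permutes {1..n}" and "contains_pattern (one_line n p) (delta k)"
  shows "contains_pattern (one_line n (inv p)) (delta k)"
proof -
  obtain f where mono: "strict_mono_on {..<k} f" and range: "\<forall>j<k. f j \<in> {1..n}"
    and decr: "\<forall>a<k. \<forall>b<k. a < b \<longrightarrow> p (f b) < p (f a)"
    using assms(2) unfolding one_line_contains_delta_iff by blast
  \<comment> \<open>the points (f j, p (f j)) reflected in the diagonal, listed in reverse order\<close>
  let ?g = "\<lambda>j. p (f (k - Suc j))"
  have inv_g: "inv p (?g j) = f (k - Suc j)" for j
    using perm by (simp add: permutes_inverses(2))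
  show ?thesis
    unfolding one_line_contains_delta_iff
  proof (intro exI[of _ ?g] conjI allI impI strict_mono_onI)
    fix a b assume "a \<in> {..<k}" "b \<in> {..<k}" "a < b"
    then show "?g a < ?g b" using decr by simp
  next
    fix j assume "j < k"
    then show "?g j \<in> {1..n}" using range permutes_in_image[OF perm] by simp
  next
    fix a b assume "a < k" "b < k" "a < b"
    then show "inv p (?g b) < inv p (?g a)"
      unfolding inv_g by (intro strict_mono_onD[OF mono]) auto
  qed
qed

lemma avoids_one_line_inv_iff:
  assumes "p permutes {1..n}"
  shows "avoids (one_line n (inv p)) (delta k) \<longleftrightarrow> avoids (one_line n p) (delta k)"
  using one_line_inv_contains_delta[OF assms] one_line_inv_contains_delta[OF permutes_inv[OF assms]]
  unfolding avoids_def by (metis assms inv_inv_eq permutes_bij)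

lemma cycle_form_eq_Cons: "0 < n \<Longrightarrow> cycle_form n p = 1 # tl (cycle_form n p)"
  by (cases n) (simp_all add: cycle_form_def upt_conv_Cons del: upt_Suc)

lemma cyclic_perm_funpow_n:
  assumes "cyclic_perm n p"
  shows "(p ^^ n) 1 = 1"
proof (cases "n = 0")
  case False
  have perm: "p permutes {1..n}" and set_cf: "set (cycle_form n p) = {1..n}"
    using assms unfolding cyclic_perm_def by auto
  have len: "length (cycle_form n p) = n" by (simp add: cycle_form_def)
  have distinct: "distinct (cycle_form n p)"
    using set_cf len by (intro card_distinct) simp
  have "(p ^^ (n - 1)) 1 \<in> {1..n}" using set_cf False unfolding cycle_form_def by force
  then have "p ((p ^^ (n - 1)) 1) \<in> {1..n}" using permutes_in_image[OF perm] by blast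
  moreover have "p ((p ^^ (n - 1)) 1) = (p ^^ n) 1"
    using False by (metis Suc_pred' comp_apply funpow.simps(2) gr0I)
  ultimately have "(p ^^ n) 1 \<in> (\<lambda>i. (p ^^ i) 1) ` {0..<n}"
    using set_cf by (simp add: cycle_form_def)
  then obtain j where j: "j < n" "(p ^^ j) 1 = (p ^^ n) 1" by force
  have "(p ^^ j) ((p ^^ (n - j)) 1) = (p ^^ j) 1"
    using j by (metis funpow_add le_add_diff_inverse less_imp_le_nat o_apply)
  then have "(p ^^ (n - j)) 1 = (p ^^ 0) 1"
    using inj_fn[OF permutes_inj[OF perm]] by (simp add: inj_eq)
  show ?thesis
  proof (cases "j = 0")
    case True
    then show ?thesis using j by simp
  next
    case j_pos: False
    with j have "cycle_form n p ! (n - j) = cycle_form n p ! 0"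
      using \<open>(p ^^ (n - j)) 1 = (p ^^ 0) 1\<close> unfolding cycle_form_def by (simp del: upt.simps)
    then have "n - j = 0" using nth_eq_iff_index_eq[OF distinct] len j j_pos by simp
    with j show ?thesis by simp
  qed
qed simp

lemma cycle_form_inv:
  assumes "cyclic_perm n p" and "0 < n"
  shows "cycle_form n (inv p) = 1 # rev (tl (cycle_form n p))"
proof (rule nth_equalityI)
  show "length (cycle_form n (inv p)) = length (1 # rev (tl (cycle_form n p)))"
    using assms(2) by (simp add: cycle_form_def)
next
  fix i assume "i < length (cycle_form n (inv p))"
  then have i: "i < n" by (simp add: cycle_form_def)
  have bij: "bij p" using assms(1) permutes_bij unfolding cyclic_perm_def by blast
  show "cycle_form n (inv p) ! i = (1 # rev (tl (cycle_form n p))) ! i"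
  proof (cases i)
    case 0
    then show ?thesis using i by (simp add: cycle_form_def)
  next
    case (Suc i')
    have "(p ^^ i) ((p ^^ (n - i)) 1) = (p ^^ n) 1"
      using i by (metis funpow_add le_add_diff_inverse less_imp_le_nat o_apply)
    then have "(inv p ^^ i) 1 = (inv p ^^ i) ((p ^^ i) ((p ^^ (n - i)) 1))"
      using cyclic_perm_funpow_n[OF assms(1)] by simp
    also have "\<dots> = (p ^^ (n - i)) 1"
      using inv_fn_o_fn_is_id[OF bij, of i] by (simp add: fun_eq_iff)
    also have "\<dots> = (1 # rev (tl (cycle_form n p))) ! i"
      using i Suc by (simp add: rev_nth nth_tl cycle_form_def Suc_diff_Suc del: upt.simps)
    finally show ?thesis using i by (simp add: cycle_form_def del: upt.simps)
  qed
qed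

lemma cyclic_perm_inv:
  assumes "cyclic_perm n p" and "0 < n"
  shows "cyclic_perm n (inv p)"
proof -
  have "set (cycle_form n (inv p)) = set (cycle_form n p)"
    using cycle_form_inv[OF assms] cycle_form_eq_Cons[OF assms(2), of p]
    by (metis set_rev list.set(2))
  then show ?thesis using assms(1) permutes_inv unfolding cyclic_perm_def by auto
qed

lemma avoids_cycle_form_inv:
  assumes "cyclic_perm n p" and "0 < n" and "avoids (cycle_form n p) s"
    and "\<exists>y\<in>set s. y < last s"
  shows "avoids (cycle_form n (inv p)) (rev s)"
  unfolding avoids_def cycle_form_inv[OF assms(1,2)]
proof
  let ?T = "tl (cycle_form n p)"
  assume "contains_pattern (1 # rev ?T) (rev s)"
  moreover have "\<forall>y\<in>set (rev ?T). 1 \<le> y"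
    using assms(1) cycle_form_eq_Cons[OF assms(2), of p] unfolding cyclic_perm_def
    by (metis atLeastAtMost_iff insert_iff list.set(2) set_rev)
  moreover have "\<exists>y\<in>set (rev s). y < hd (rev s)" using assms(4) by (simp add: hd_rev)
  ultimately have "contains_pattern (rev ?T) (rev s)" by (rule contains_pattern_Cons_min)
  then have "contains_pattern (1 # ?T) s"
    unfolding contains_pattern_rev_iff rev_rev_ident by (rule contains_pattern_Cons)
  then show False
    using assms(3) cycle_form_eq_Cons[OF assms(2), of p] unfolding avoids_def by simp
qed

lemma a_count_rev:
  assumes "0 < n" and "\<exists>y\<in>set s. y < hd s" and "\<exists>y\<in>set s. y < last s"
  shows "a_count n k (rev s) = a_count n k s"
proof -
  define A where "A t = {p. cyclic_perm n p \<and> avoids (one_line n p) (delta k)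
                              \<and> avoids (cycle_form n p) t}" for t
  have inv_maps: "inv ` A t \<subseteq> A (rev t)" if "\<exists>y\<in>set t. y < last t" for t
    using that assms(1) cyclic_perm_inv avoids_cycle_form_inv avoids_one_line_inv_iff
    unfolding A_def cyclic_perm_def by fastforce
  have "bij_betw inv (A (rev s)) (A s)"
  proof (rule bij_betw_byWitness[where f' = inv])
    show "\<forall>p\<in>A (rev s). inv (inv p) = p" "\<forall>p\<in>A s. inv (inv p) = p"
      unfolding A_def cyclic_perm_def by (auto intro: inv_inv_eq permutes_bij)
    show "inv ` A (rev s) \<subseteq> A s" using inv_maps[of "rev s"] assms(2) by (simp add: last_rev)
    show "inv ` A s \<subseteq> A (rev s)" using inv_maps[of s] assms(3) by simp
  qed
  then show ?thesis unfolding a_count_def A_def by (rule bij_betw_same_card)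
qed

theorem theorem2p10:
  shows "(\<forall>n\<ge>1. \<forall>k\<ge>1. a_count n k [3,1,2] = a_count n k [2,1,3])
       \<and> (\<forall>k\<ge>1. gf k [3,1,2] = gf k [2,1,3])"
proof -
  have count_eq: "a_count n k [3,1,2] = a_count n k [2,1,3]" if "1 \<le> n" for n k
    using a_count_rev[of n "[3,1,2]" k] that by simp
  then have "gf k [3,1,2] = gf k [2,1,3]" for k
    unfolding gf_def by (metis (no_types, lifting))
  with count_eq show ?thesis by blast
qed

end
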